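(* The structure $(B_\infty,T,\cdot,\equiv,1,\sigma_1,\sigma_1^{-1})$ is a canonical model for the link axioms. That is: (i) it satisfies the link axioms; (ii) every element of $B_\infty$ is the interpretation of a closed term of the language (built from $1,\sigma,\bar\sigma$ using $\cdot$ and $T$); (iii) for every structure $(S,T_1,*,\equiv',1',\sigma_1',\bar\sigma_1')$ satisfying the link axioms there is a unique homomorphism of structures $f:B_\infty\to S$, i.e. a unique map with $f(1)=1'$, $f(\sigma_1)=\sigma_1'$, $f(\sigma_1^{-1})=\bar\sigma_1'$, $f(x\cdot y)=f(x)*f(y)$, $f(T(x))=T_1(f(x))$ for all $x,y$, and $x\equiv y\Rightarrow f(x)\equiv' f(y)$.
   Context: Consider a first-order language (with equality) with signature $(\cdot,T,\equiv,1,\sigma,\bar\sigma)$: $\cdot$ binary function, $T$ unary function, $\equiv$ binary predicate, constants $1,\sigma,\bar\sigma$. The link axioms are: $\forall x,y,z\ x\cdot(y\cdot z)=(x\cdot y)\cdot z$; $\forall x\ 1\cdot x=x$; $\forall x\ x\cdot 1=x$; $\sigma\cdot\bar\sigma=\bar\sigma\cdot\sigma=1$; $\forall x,y\ T(x\cdot y)=T(x)\cdot T(y)$; $T(1)=1$; $\sigma\cdot T(\sigma)\cdot\sigma=T(\sigma)\cdot\sigma\cdot T(\sigma)$; $\forall b\ \sigma\cdot T(T(b))=T(T(b))\cdot\sigma$; $\equiv$ is reflexive, symmetric and transitive; $\forall x,y,z\ (y\cdot z=1\to x\equiv y\cdot x\cdot z)$; $\forall x\ x\equiv\sigma\cdot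 T(x)$; $\forall x\ x\equiv\bar\sigma\cdot T(x)$. $B_\infty$ is the group generated by $\{\sigma_i\}_{i\in\mathbb{N}}$ with relations $\sigma_i\sigma_j=\sigma_j\sigma_i$ for $i\ge j+2$ and $\sigma_i\sigma_{i+1}\sigma_i=\sigma_{i+1}\sigma_i\sigma_{i+1}$; $T$ is the homomorphism of $B_\infty$ with $T(\sigma_i)=\sigma_{i+1}$; $\cdot$ is the group multiplication, $1$ the identity, and $\sigma,\bar\sigma$ are interpreted as $\sigma_1,\sigma_1^{-1}$; $\equiv$ on $B_\infty$ is the equivalence relation generated by $aba^{-1}\equiv b$, $b\equiv\sigma_1T(b)$, $b\equiv\sigma_1^{-1}T(b)$ for all $a,b\in B_\infty$. *)

theory Defs
  imports Main
begin

text \<open>A letter (i, False) stands for sigma_(i+1), and (i, True) for its inverse.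
  So index 0 is sigma_1.\<close>

type_synonym bword = "(nat \<times> bool) list"

inductive braid_rel :: "bword \<Rightarrow> bword \<Rightarrow> bool" where
  br_refl: "braid_rel u u"
| br_sym: "braid_rel u v \<Longrightarrow> braid_rel v u"
| br_trans: "braid_rel u v \<Longrightarrow> braid_rel v w \<Longrightarrow> braid_rel u w"
| br_cong: "braid_rel u v \<Longrightarrow> braid_rel (a @ u @ b) (a @ v @ b)"
| br_cancel: "braid_rel [(i, e), (i, \<not> e)] []"
| br_comm: "j + 2 \<le> i \<Longrightarrow> braid_rel [(i, False), (j, False)] [(j, False), (i, False)]"
| br_braid: "braid_rel [(i, False), (Suc i, False), (i, False)]
                       [(Suc i, False), (i, False), (Suc i, False)]"

lemma braid_rel_equivp: "equivp braid_rel"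
  by (rule equivpI; auto simp: reflp_def symp_def transp_def intro: br_refl br_sym br_trans)

quotient_type braid = bword / braid_rel
  by (rule braid_rel_equivp)

lemma braid_rel_append:
  assumes "braid_rel u v" "braid_rel x y"
  shows "braid_rel (u @ x) (v @ y)"
proof -
  have "braid_rel ([] @ u @ x) ([] @ v @ x)" using assms(1) by (rule br_cong)
  moreover have "braid_rel (v @ x @ []) (v @ y @ [])" using assms(2) by (rule br_cong)
  ultimately show ?thesis by (auto intro: br_trans)
qed

definition shift_word :: "bword \<Rightarrow> bword" where
  "shift_word w = map (\<lambda>(i, e). (Suc i, e)) w"

lemma braid_rel_shift: "braid_rel u v \<Longrightarrow> braid_rel (shift_word u) (shift_word v)"
proof (induction rule: braid_rel.induct)
  case (br_cong u v a b)
  then show ?case using braid_rel.br_cong by (simp add: shift_word_def)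
next
  case (br_comm j i)
  then show ?case using braid_rel.br_comm[of "Suc j" "Suc i"] by (simp add: shift_word_def)
qed (auto simp: shift_word_def intro: braid_rel.intros)

lift_definition bmult :: "braid \<Rightarrow> braid \<Rightarrow> braid" is "(@)"
  by (rule braid_rel_append)

lift_definition bone :: braid is "[]" .

lift_definition bsig :: braid is "[(0, False)]" .

lift_definition bsigbar :: braid is "[(0, True)]" .

lift_definition bT :: "braid \<Rightarrow> braid" is shift_word
  by (rule braid_rel_shift)

definition binv :: "braid \<Rightarrow> braid" where
  "binv a = (SOME b. bmult a b = bone \<and> bmult b a = bone)"

inductive bequiv :: "braid \<Rightarrow> braid \<Rightarrow> bool" where
  be_refl: "bequiv x x"
| be_sym: "bequiv x y \<Longrightarrow> bequiv y x"
| be_trans: "bequiv x y \<Longrightarrow> bequiv y z \<Longrightarrow> bequiv x z"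
| be_conj: "bequiv (bmult (bmult a b) (binv a)) b"
| be_stab: "bequiv b (bmult bsig (bT b))"
| be_stab_inv: "bequiv b (bmult bsigbar (bT b))"

definition link_axioms ::
  "('a \<Rightarrow> 'a \<Rightarrow> 'a) \<Rightarrow> ('a \<Rightarrow> 'a) \<Rightarrow> ('a \<Rightarrow> 'a \<Rightarrow> bool) \<Rightarrow> 'a \<Rightarrow> 'a \<Rightarrow> 'a \<Rightarrow> bool" where
  "link_axioms m T E one s sb \<longleftrightarrow>
     (\<forall>x y z. m x (m y z) = m (m x y) z) \<and>
     (\<forall>x. m one x = x) \<and>
     (\<forall>x. m x one = x) \<and>
     m s sb = one \<and> m sb s = one \<and>
     (\<forall>x y. T (m x y) = m (T x) (T y)) \<and>
     T one = one \<and>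
     m (m s (T s)) s = m (m (T s) s) (T s) \<and>
     (\<forall>b. m s (T (T b)) = m (T (T b)) s) \<and>
     (\<forall>x. E x x) \<and>
     (\<forall>x y. E x y \<longrightarrow> E y x) \<and>
     (\<forall>x y z. E x y \<longrightarrow> E y z \<longrightarrow> E x z) \<and>
     (\<forall>x y z. m y z = one \<longrightarrow> E x (m (m y x) z)) \<and>
     (\<forall>x. E x (m s (T x))) \<and>
     (\<forall>x. E x (m sb (T x)))"

datatype lterm = LOne | LSig | LSigBar | LMul lterm lterm | LT lterm

fun term_eval ::
  "('a \<Rightarrow> 'a \<Rightarrow> 'a) \<Rightarrow> ('a \<Rightarrow> 'a) \<Rightarrow> 'a \<Rightarrow> 'a \<Rightarrow> 'a \<Rightarrow> lterm \<Rightarrow> 'a" where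
  "term_eval m T one s sb LOne = one"
| "term_eval m T one s sb LSig = s"
| "term_eval m T one s sb LSigBar = sb"
| "term_eval m T one s sb (LMul t u) = m (term_eval m T one s sb t) (term_eval m T one s sb u)"
| "term_eval m T one s sb (LT t) = T (term_eval m T one s sb t)"

end

theory Submission
  imports Defs
begin

text \<open>Words modulo the braid relations form a group, and the link axioms hold in it by
  construction of \<open>bequiv\<close>; every braid is the value of the term spelling out one of its
  words. In a link model \<open>S\<close>, evaluating that term respects the braid relations (these are
  exactly the algebraic link axioms), which gives a homomorphism \<open>B\<^sub>\<infinity> \<rightarrow> S\<close>. It is unique
  because any homomorphism commutes with term evaluation and every braid is the value of a
  term.\<close>

lemmas braid_abs_eqs = bmult.abs_eq bT.abs_eq bone.abs_eq bsig.abs_eq bsigbar.abs_eq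
  braid.abs_eq_iff

declare br_trans [trans]

lemma braid_rel_congI:
  "braid_rel u v \<Longrightarrow> a @ u @ b = l \<Longrightarrow> a @ v @ b = r \<Longrightarrow> braid_rel l r"
  using br_cong by blast

definition inv_word :: "bword \<Rightarrow> bword" where
  "inv_word w = rev (map (\<lambda>(i, e). (i, \<not> e)) w)"

lemma inv_word_Cons: "inv_word ((i, e) # w) = inv_word w @ [(i, \<not> e)]"
  by (simp add: inv_word_def)

lemma braid_rel_append_inv_word: "braid_rel (w @ inv_word w) []"
proof (induction w)
  case Nil
  show ?case by (simp add: inv_word_def br_refl)
next
  case (Cons x w)
  obtain i e where x: "x = (i, e)" by fastforce
  have "braid_rel ((x # w) @ inv_word (x # w)) [(i, e), (i, \<not> e)]"
    by (rule braid_rel_congI[OF Cons.IH, of "[x]" "[(i, \<not> e)]"])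
       (simp_all add: inv_word_Cons x)
  then show ?case using br_cancel by (blast intro: br_trans)
qed

lemma braid_rel_inv_word_append: "braid_rel (inv_word w @ w) []"
proof (induction w)
  case Nil
  show ?case by (simp add: inv_word_def br_refl)
next
  case (Cons x w)
  obtain i e where x: "x = (i, e)" by fastforce
  have "braid_rel (inv_word (x # w) @ (x # w)) (inv_word w @ [] @ w)"
    by (rule braid_rel_congI[OF br_cancel[of i "\<not> e"]]) (simp_all add: inv_word_Cons x)
  then show ?case using Cons.IH by (auto intro: br_trans)
qed

lemma bmult_assoc: "bmult x (bmult y z) = bmult (bmult x y) z"
  by (induction x rule: braid.abs_induct, induction y rule: braid.abs_induct,
      induction z rule: braid.abs_induct) (simp add: braid_abs_eqs)

lemma bmult_bone_left: "bmult bone x = x"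
  by (induction x rule: braid.abs_induct) (simp add: braid_abs_eqs)

lemma bmult_bone_right: "bmult x bone = x"
  by (induction x rule: braid.abs_induct) (simp add: braid_abs_eqs)

lemma braid_inverse_exists: "\<exists>y. bmult x y = bone \<and> bmult y x = bone"
proof (induction x rule: braid.abs_induct)
  case (1 w)
  show ?case
    by (rule exI[of _ "abs_braid (inv_word w)"])
       (simp add: braid_abs_eqs braid_rel_append_inv_word braid_rel_inv_word_append)
qed

lemma binv_eqI:
  assumes "bmult y z = bone"
  shows "binv y = z"
proof -
  obtain w where w: "bmult y w = bone" "bmult w y = bone"
    using braid_inverse_exists by blast
  have "bmult y (binv y) = bone \<and> bmult (binv y) y = bone"
    unfolding binv_def by (rule someI[of _ w]) (use w in simp)
  then have "binv y = w" by (metis w(2) bmult_assoc bmult_bone_left bmult_bone_right)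
  moreover have "z = w" by (metis assms w(2) bmult_assoc bmult_bone_left bmult_bone_right)
  ultimately show ?thesis by simp
qed

lemma bmult_binv: "bmult x (binv x) = bone"
  using braid_inverse_exists binv_eqI by metis

lemma braid_rel_far_comm:
  assumes "2 \<le> i"
  shows "braid_rel [(0, False), (i, e)] [(i, e), (0, False)]"
proof (cases e)
  case False
  then show ?thesis using br_comm[of 0 i] assms by (auto intro: br_sym)
next
  case True
  have "braid_rel [(0, False), (i, True)] [(i, True), (i, False), (0, False), (i, True)]"
    by (rule braid_rel_congI[OF br_sym[OF br_cancel[of i True]], of "[]"]) simp_all
  also have "braid_rel \<dots> [(i, True), (0, False), (i, False), (i, True)]"
    by (rule braid_rel_congI[OF br_comm[of 0 i], of "[(i, True)]" "[(i, True)]"])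
       (use assms in \<open>simp_all add: eval_nat_numeral\<close>)
  also have "braid_rel \<dots> [(i, True), (0, False)]"
    by (rule braid_rel_congI[OF br_cancel[of i False], of "[(i, True), (0, False)]" "[]"])
       simp_all
  finally show ?thesis using True by simp
qed

lemma braid_rel_sig_shift2:
  "braid_rel ((0, False) # shift_word (shift_word w)) (shift_word (shift_word w) @ [(0, False)])"
proof (induction w)
  case Nil
  show ?case by (simp add: shift_word_def br_refl)
next
  case (Cons x w)
  obtain i e where x: "x = (i, e)" by fastforce
  let ?w = "shift_word (shift_word w)"
  have "braid_rel ((0, False) # shift_word (shift_word (x # w)))
      ([(Suc (Suc i), e), (0, False)] @ ?w)"
    by (rule braid_rel_congI[OF braid_rel_far_comm[of "Suc (Suc i)" e], of "[]" ?w])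
       (simp_all add: x shift_word_def)
  also have "braid_rel \<dots> (shift_word (shift_word (x # w)) @ [(0, False)])"
    by (rule braid_rel_congI[OF Cons.IH, of "[(Suc (Suc i), e)]" "[]"])
       (simp_all add: x shift_word_def)
  finally show ?case .
qed

lemma braid_link_axioms: "link_axioms bmult bT bequiv bone bsig bsigbar"
  unfolding link_axioms_def
proof (intro conjI allI impI)
  fix x y :: braid
  show "bT (bmult x y) = bmult (bT x) (bT y)"
    by (induction x rule: braid.abs_induct, induction y rule: braid.abs_induct)
       (simp add: braid_abs_eqs shift_word_def)
next
  fix b :: braid
  show "bmult bsig (bT (bT b)) = bmult (bT (bT b)) bsig"
    by (induction b rule: braid.abs_induct) (simp add: braid_abs_eqs braid_rel_sig_shift2)
next
  fix x y z :: braid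
  assume "bmult y z = bone"
  then have "binv y = z" by (rule binv_eqI)
  then show "bequiv x (bmult (bmult y x) z)" using be_conj[of y x] by (auto intro: be_sym)
next
  show "bmult (bmult bsig (bT bsig)) bsig = bmult (bmult (bT bsig) bsig) (bT bsig)"
    using br_braid[of 0] by (simp add: braid_abs_eqs shift_word_def)
next
  show "bmult bsig bsigbar = bone" "bmult bsigbar bsig = bone"
    using br_cancel[of 0 False] br_cancel[of 0 True] by (simp_all add: braid_abs_eqs)
next
  fix x y z :: braid
  show "bequiv x y \<Longrightarrow> bequiv y x" by (rule be_sym)
  show "bequiv x y \<Longrightarrow> bequiv y z \<Longrightarrow> bequiv x z" by (rule be_trans)
next
  show "bT bone = bone" by (simp add: braid_abs_eqs shift_word_def br_refl)
qed (simp_all add: bmult_assoc bmult_bone_left bmult_bone_right be_refl be_stab be_stab_inv)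

fun word_term :: "bword \<Rightarrow> lterm" where
  "word_term [] = LOne"
| "word_term ((i, e) # w) = LMul ((LT ^^ i) (if e then LSigBar else LSig)) (word_term w)"

lemma term_eval_LT_funpow:
  "term_eval m T one s sb ((LT ^^ i) t) = (T ^^ i) (term_eval m T one s sb t)"
  by (induction i) simp_all

lemma term_eval_hom:
  assumes "h one = one'" "h s = s'" "h sb = sb'"
    and "\<And>x y. h (m x y) = m' (h x) (h y)" and "\<And>x. h (T x) = T' (h x)"
  shows "h (term_eval m T one s sb t) = term_eval m' T' one' s' sb' t"
  by (induction t) (simp_all add: assms)

lemma bT_funpow_letter: "(bT ^^ i) (abs_braid [(0, e)]) = abs_braid [(i, e)]"
  by (induction i) (simp_all add: braid_abs_eqs shift_word_def)

lemma term_eval_word_term: "term_eval bmult bT bone bsig bsigbar (word_term w) = abs_braid w"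
proof (induction w)
  case Nil
  show ?case by (simp add: braid_abs_eqs)
next
  case (Cons x w)
  obtain i e where x: "x = (i, e)" by fastforce
  have "(bT ^^ i) (if e then bsigbar else bsig) = abs_braid [(i, e)]"
    using bT_funpow_letter[of i e] by (cases e) (simp_all add: braid_abs_eqs)
  then have "term_eval bmult bT bone bsig bsigbar (word_term (x # w))
      = bmult (abs_braid [(i, e)]) (abs_braid w)"
    using Cons.IH by (cases e) (simp_all add: x term_eval_LT_funpow)
  then show ?case by (simp add: x braid_abs_eqs)
qed

locale link_model =
  fixes mult :: "'a \<Rightarrow> 'a \<Rightarrow> 'a" and T :: "'a \<Rightarrow> 'a" and E :: "'a \<Rightarrow> 'a \<Rightarrow> bool"
    and one :: 'a and s :: 'a and sb :: 'a
  assumes link: "link_axioms mult T E one s sb"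
begin

lemma
  assoc: "mult x (mult y z) = mult (mult x y) z" and
  left_one: "mult one x = x" and
  right_one: "mult x one = x" and
  s_sb: "mult s sb = one" and
  sb_s: "mult sb s = one" and
  T_mult: "T (mult x y) = mult (T x) (T y)" and
  T_one: "T one = one" and
  braid_s: "mult (mult s (T s)) s = mult (mult (T s) s) (T s)" and
  far_comm_s: "mult s (T (T b)) = mult (T (T b)) s"
  using link unfolding link_axioms_def by auto

lemma
  E_refl: "E x x" and
  E_sym: "E x y \<Longrightarrow> E y x" and
  E_trans: "E x y \<Longrightarrow> E y z \<Longrightarrow> E x z" and
  E_conj: "mult y z = one \<Longrightarrow> E x (mult (mult y x) z)" and
  E_stab: "E x (mult s (T x))" and
  E_stab_inv: "E x (mult sb (T x))"
  using link unfolding link_axioms_def by blast+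

lemma funpow_T_mult: "(T ^^ n) (mult x y) = mult ((T ^^ n) x) ((T ^^ n) y)"
  by (induction n) (simp_all add: T_mult)

lemma funpow_T_one: "(T ^^ n) one = one"
  by (induction n) (simp_all add: T_one)

abbreviation eval_term :: "lterm \<Rightarrow> 'a" where
  "eval_term \<equiv> term_eval mult T one s sb"

lemma eval_word_term_Cons:
  "eval_term (word_term ((i, e) # w)) =
    mult ((T ^^ i) (if e then sb else s)) (eval_term (word_term w))"
  by (cases e) (simp_all add: term_eval_LT_funpow)

lemma eval_word_term_append:
  "eval_term (word_term (u @ v)) = mult (eval_term (word_term u)) (eval_term (word_term v))"
  by (induction u rule: word_term.induct) (simp_all add: eval_word_term_Cons left_one assoc)

lemma eval_word_term_shift: "eval_term (word_term (shift_word w)) = T (eval_term (word_term w))"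
  by (induction w rule: word_term.induct)
     (simp_all add: shift_word_def eval_word_term_Cons T_mult T_one if_distrib[of T])

lemma eval_word_term_respects:
  "braid_rel u v \<Longrightarrow> eval_term (word_term u) = eval_term (word_term v)"
proof (induction rule: braid_rel.induct)
  case (br_cong u v a b)
  then show ?case by (simp add: eval_word_term_append)
next
  case (br_cancel i e)
  have "mult (if e then sb else s) (if \<not> e then sb else s) = one"
    by (simp add: s_sb sb_s)
  then show ?case
    by (simp only: eval_word_term_Cons word_term.simps(1) term_eval.simps(1) right_one
        funpow_T_mult[symmetric] funpow_T_one)
next
  case (br_comm j i)
  obtain k where "i = j + 2 + k"
    using le_Suc_ex[OF br_comm] by blast
  then have "i = j + Suc (Suc k)" by simp
  then have si: "(T ^^ i) s = (T ^^ j) (T (T ((T ^^ k) s)))"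
    by (simp only: funpow_add o_apply funpow.simps(2))
  show ?case
    by (simp only: eval_word_term_Cons word_term.simps(1) term_eval.simps(1) right_one if_False
        si funpow_T_mult[symmetric] far_comm_s)
next
  case (br_braid i)
  have si: "(T ^^ Suc i) s = (T ^^ i) (T s)"
    by (simp only: funpow_Suc_right o_apply)
  show ?case
    by (simp only: eval_word_term_Cons word_term.simps(1) term_eval.simps(1) right_one if_False
        si assoc funpow_T_mult[symmetric] braid_s)
qed simp_all

definition braid_eval :: "braid \<Rightarrow> 'a" where
  "braid_eval x = eval_term (word_term (rep_braid x))"

lemma braid_eval_abs: "braid_eval (abs_braid w) = eval_term (word_term w)"
  unfolding braid_eval_def
  by (rule eval_word_term_respects, rule Quotient3_rep_abs[OF Quotient3_braid br_refl])

lemma braid_eval_bmult: "braid_eval (bmult x y) = mult (braid_eval x) (braid_eval y)"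
  by (induction x rule: braid.abs_induct, induction y rule: braid.abs_induct)
     (simp add: braid_abs_eqs braid_eval_abs eval_word_term_append)

lemma braid_eval_bT: "braid_eval (bT x) = T (braid_eval x)"
  by (induction x rule: braid.abs_induct)
     (simp add: braid_abs_eqs braid_eval_abs eval_word_term_shift)

lemma braid_eval_bone: "braid_eval bone = one"
  by (simp add: bone_def braid_eval_abs)

lemma braid_eval_bsig: "braid_eval bsig = s"
  by (simp add: bsig_def braid_eval_abs right_one)

lemma braid_eval_bsigbar: "braid_eval bsigbar = sb"
  by (simp add: bsigbar_def braid_eval_abs right_one)

lemma braid_eval_bequiv: "bequiv x y \<Longrightarrow> E (braid_eval x) (braid_eval y)"
proof (induction rule: bequiv.induct)
  case (be_conj a b)
  have "mult (braid_eval a) (braid_eval (binv a)) = one"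
    by (metis bmult_binv braid_eval_bmult braid_eval_bone)
  then have "E (braid_eval b) (mult (mult (braid_eval a) (braid_eval b)) (braid_eval (binv a)))"
    by (rule E_conj)
  then show ?case unfolding braid_eval_bmult by (rule E_sym)
next
  case (be_stab b)
  show ?case by (simp add: braid_eval_bmult braid_eval_bT braid_eval_bsig E_stab)
next
  case (be_stab_inv b)
  show ?case by (simp add: braid_eval_bmult braid_eval_bT braid_eval_bsigbar E_stab_inv)
qed (fact E_refl, erule E_sym, erule (1) E_trans)

lemma braid_hom_unique:
  assumes "g bone = one" "g bsig = s" "g bsigbar = sb"
    and "\<And>x y. g (bmult x y) = mult (g x) (g y)" and "\<And>x. g (bT x) = T (g x)"
  shows "g = braid_eval"
proof
  fix x
  show "g x = braid_eval x"
  proof (induction x rule: braid.abs_induct)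
    case (1 w)
    have "g (abs_braid w) = g (term_eval bmult bT bone bsig bsigbar (word_term w))"
      by (simp only: term_eval_word_term)
    also have "\<dots> = eval_term (word_term w)"
      by (rule term_eval_hom) (fact assms)+
    finally show ?case by (simp only: braid_eval_abs)
  qed
qed

end

theorem theorem6p4:
  shows "link_axioms bmult bT bequiv bone bsig bsigbar \<and>
    (\<forall>x::braid. \<exists>t. term_eval bmult bT bone bsig bsigbar t = x) \<and>
    (\<forall>(m :: 'a \<Rightarrow> 'a \<Rightarrow> 'a) T1 E one s sb. link_axioms m T1 E one s sb \<longrightarrow>
       (\<exists>!f :: braid \<Rightarrow> 'a.
          f bone = one \<and> f bsig = s \<and> f bsigbar = sb \<and>
          (\<forall>x y. f (bmult x y) = m (f x) (f y)) \<and>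
          (\<forall>x. f (bT x) = T1 (f x)) \<and>
          (\<forall>x y. bequiv x y \<longrightarrow> E (f x) (f y))))"
proof (intro conjI allI impI)
  show "link_axioms bmult bT bequiv bone bsig bsigbar" by (rule braid_link_axioms)
next
  fix x :: braid
  show "\<exists>t. term_eval bmult bT bone bsig bsigbar t = x"
    by (induction x rule: braid.abs_induct) (use term_eval_word_term in blast)
next
  fix m :: "'a \<Rightarrow> 'a \<Rightarrow> 'a" and T1 E one s sb
  assume "link_axioms m T1 E one s sb"
  then interpret link_model m T1 E one s sb by (rule link_model.intro)
  show "\<exists>!f :: braid \<Rightarrow> 'a.
          f bone = one \<and> f bsig = s \<and> f bsigbar = sb \<and>
          (\<forall>x y. f (bmult x y) = m (f x) (f y)) \<and>
          (\<forall>x. f (bT x) = T1 (f x)) \<and>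
          (\<forall>x y. bequiv x y \<longrightarrow> E (f x) (f y))"
    using braid_eval_bone braid_eval_bsig braid_eval_bsigbar braid_eval_bmult braid_eval_bT
      braid_eval_bequiv braid_hom_unique
    by (intro ex1I[of _ braid_eval]) blast+
qed

end
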